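(* Let $\Omega_1\subset\mathbb{R}^{d_1}$ and $\Omega_2\subset\mathbb{R}^{d_2}$ be measurable sets of finite positive Lebesgue measure, and let $\Lambda\subset\mathbb{R}^{d_1}\times\mathbb{R}^{d_2}$ be such that $(\Omega_1\times\Omega_2,\Lambda)$ is a spectral pair in $\mathbb{R}^{d_1+d_2}$. Let $P_1\Lambda=\{\lambda_1\in\mathbb{R}^{d_1}:\exists\lambda_2\in\mathbb{R}^{d_2}\text{ with }(\lambda_1,\lambda_2)\in\Lambda\}$ and, for $\lambda_1\in P_1\Lambda$, let $\Lambda(\lambda_1)=\{\lambda_2\in\mathbb{R}^{d_2}:(\lambda_1,\lambda_2)\in\Lambda\}$. Then for every $\lambda_1\in P_1\Lambda$, the exponentials $\{e^{(2)}_\xi:\xi\in\Lambda(\lambda_1)\}$ are mutually orthogonal in $\mathcal{L}^2(\Omega_2)$; and they are total in $\mathcal{L}^2(\Omega_2)$ if and only if $e^{(1)}_{\lambda_1}$ and $e^{(1)}_{\lambda_1'}$ are orthogonal in $\mathcal{L}^2(\Omega_1)$ for all $\lambda_1'\in P_1\Lambda\setminus\{\lambda_1\}$.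
   Context: For $\xi\in\mathbb{R}^{d_j}$, $e^{(j)}_\xi(x)=e^{i2\pi\xi\cdot x}$ for $x\in\mathbb{R}^{d_j}$ ($j=1,2$); similarly $e_\lambda$ on $\mathbb{R}^{d}$. For a measurable set $\Omega\subset\mathbb{R}^d$ of finite positive Lebesgue measure and a set $\Lambda\subset\mathbb{R}^d$, $(\Omega,\Lambda)$ is called a spectral pair if the exponentials $e_\lambda$, $\lambda\in\Lambda$, form an orthogonal basis of $\mathcal{L}^2(\Omega)$ (mutually orthogonal with dense linear span). A family is total in a Hilbert space if its linear span is dense. *)

theory Defs
  imports "HOL-Analysis.Analysis"
begin

definition expo :: "'a::euclidean_space \<Rightarrow> 'a \<Rightarrow> complex" where
  "expo \<xi> x = exp (\<i> * complex_of_real (2 * pi * (\<xi> \<bullet> x)))"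

definition L2_inner :: "'a::euclidean_space set \<Rightarrow> ('a \<Rightarrow> complex) \<Rightarrow> ('a \<Rightarrow> complex) \<Rightarrow> complex" where
  "L2_inner \<Omega> f g = (LINT x:\<Omega>|lebesgue. f x * cnj (g x))"

definition square_integrable :: "'a::euclidean_space set \<Rightarrow> ('a \<Rightarrow> complex) \<Rightarrow> bool" where
  "square_integrable \<Omega> f \<longleftrightarrow>
     f \<in> borel_measurable lebesgue \<and> set_integrable lebesgue \<Omega> (\<lambda>x. (norm (f x))\<^sup>2)"

definition exps_orthogonal :: "'a::euclidean_space set \<Rightarrow> 'a set \<Rightarrow> bool" where
  "exps_orthogonal \<Omega> \<Lambda> \<longleftrightarrow>
     (\<forall>l\<in>\<Lambda>. \<forall>\<mu>\<in>\<Lambda>. l \<noteq> \<mu> \<longrightarrow> L2_inner \<Omega> (expo l) (expo \<mu>) = 0)"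

definition exps_total :: "'a::euclidean_space set \<Rightarrow> 'a set \<Rightarrow> bool" where
  "exps_total \<Omega> \<Lambda> \<longleftrightarrow>
     (\<forall>f. square_integrable \<Omega> f \<longrightarrow>
        (\<forall>\<epsilon>>0. \<exists>S c. finite S \<and> S \<subseteq> \<Lambda> \<and>
            (LINT x:\<Omega>|lebesgue. (norm (f x - (\<Sum>\<xi>\<in>S. c \<xi> * expo \<xi> x)))\<^sup>2) < \<epsilon>))"

definition spectral_pair :: "'a::euclidean_space set \<Rightarrow> 'a set \<Rightarrow> bool" where
  "spectral_pair \<Omega> \<Lambda> \<longleftrightarrow>
     \<Omega> \<in> sets lebesgue \<and> 0 < emeasure lebesgue \<Omega> \<and> emeasure lebesgue \<Omega> < \<infinity> \<and>
     exps_orthogonal \<Omega> \<Lambda> \<and> exps_total \<Omega> \<Lambda>"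

end

theory Submission
  imports Defs
begin

text \<open>
  The exponential of frequency (l1, l2) is the product of e_l1 on the first factor and e_l2 on
  the second, so inner products of exponentials on Omega1 x Omega2 factor by Fubini. Since
  the inner product of e_l1 with itself is |Omega1| > 0, orthogonality of the exponentials of
  Lambda restricts to the fibre Lambda(l1).

  If <e_l1, e_l1'> is nonzero for some (l1', xi') in Lambda, then e_xi' is orthogonal in
  L2(Omega2) to every e_xi with xi in Lambda(l1), so its distance to their span is at least
  |Omega2|^(1/2) and the fibre is not total.

  Conversely, approximate e_l1(x) f(y) in L2(Omega1 x Omega2) by a finite combination G of
  exponentials from Lambda and let g(y) collect the terms with first frequency l1. The other
  terms are orthogonal to e_l1 on Omega1, so for every y, Pythagoras on Omega1 gives
  |Omega1| |f(y) - g(y)|^2 <= int_Omega1 |e_l1(x) f(y) - G(x, y)|^2 dx, and integrating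
  over y bounds ||f - g||^2 by ||e_l1 f - G||^2 / |Omega1|.
\<close>

lemma measure_pos_if_emeasure_pos:
  "0 < emeasure M A \<Longrightarrow> emeasure M A < \<infinity> \<Longrightarrow> 0 < measure M A"
  by (simp add: measure_def enn2real_positive_iff)

lemma set_integrable_bounded:
  fixes f :: "'a \<Rightarrow> 'c::{banach, second_countable_topology}"
  assumes "A \<in> sets M" "emeasure M A < \<infinity>" "f \<in> borel_measurable M"
    and "\<And>x. x \<in> A \<Longrightarrow> norm (f x) \<le> B"
  shows "set_integrable M A f"
proof (rule set_integrable_bound[of M A "\<lambda>_. B"])
  show "set_integrable M A (\<lambda>_. B)"
    using assms(1,2) unfolding set_integrable_def
    by (intro integrable_scaleR_left integrable_real_indicator) auto
  show "set_borel_measurable M A f"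
    unfolding set_borel_measurable_def using assms(1,3) by measurable
  show "AE x in M. x \<in> A \<longrightarrow> norm (f x) \<le> norm B"
    using assms(4) by (auto intro!: always_eventually order_trans[OF _ abs_ge_self])
qed

lemma set_integral_sum:
  fixes g :: "'i \<Rightarrow> 'a \<Rightarrow> 'c::{banach, second_countable_topology}"
  assumes "finite I" "\<And>i. i \<in> I \<Longrightarrow> set_integrable M A (g i)"
  shows "(LINT x:A|M. (\<Sum>i\<in>I. g i x)) = (\<Sum>i\<in>I. LINT x:A|M. g i x)"
  unfolding set_lebesgue_integral_def scaleR_sum_right
  using assms unfolding set_integrable_def
  by (intro Bochner_Integration.integral_sum[where f="\<lambda>i x. indicator A x *\<^sub>R g i x"])

lemma
  assumes "set_integrable M A f"
  shows set_integrable_Re: "set_integrable M A (\<lambda>x. Re (f x))"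
    and set_integral_Re: "(LINT x:A|M. Re (f x)) = Re (LINT x:A|M. f x)"
proof -
  have int: "integrable M (\<lambda>x. indicator A x *\<^sub>R f x)"
    using assms unfolding set_integrable_def .
  show "set_integrable M A (\<lambda>x. Re (f x))"
    unfolding set_integrable_def using integrable_Re[OF int] by simp
  show "(LINT x:A|M. Re (f x)) = Re (LINT x:A|M. f x)"
    unfolding set_lebesgue_integral_def using integral_Re[OF int] by simp
qed

lemma borel_measurable_cnj [measurable]:
  "f \<in> borel_measurable M \<Longrightarrow> (\<lambda>x. cnj (f x)) \<in> borel_measurable M"
  by (rule measurable_compose[of _ _ borel]) (auto intro: borel_measurable_continuous_onI continuous_intros)

section \<open>Completion of a product measure\<close>

lemma (in sigma_finite_measure) sigma_finite_measure_completion: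
  "sigma_finite_measure (completion M)"
proof
  obtain A where A: "countable A" "A \<subseteq> sets M" "\<Union>A = space M" "\<forall>a\<in>A. emeasure M a \<noteq> \<infinity>"
    using sigma_finite_countable by blast
  have "emeasure (completion M) a = emeasure M a" if "a \<in> A" for a
    using that A(2) by (simp add: subset_iff)
  with A show "\<exists>A. countable A \<and> A \<subseteq> sets (completion M) \<and> \<Union>A = space (completion M) \<and>
      (\<forall>a\<in>A. emeasure (completion M) a \<noteq> \<infinity>)"
    by (intro exI[of _ A]) auto
qed

lemma emeasure_completion_Un_null:
  assumes "S \<in> sets M" "N \<subseteq> N'" "N' \<in> null_sets M"
  shows "emeasure (completion M) (S \<union> N) = emeasure M S"
proof -
  have "N \<in> null_sets (completion M)"
    using assms by (blast intro: null_sets_completion_subset null_sets_completionI)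
  then have "emeasure (completion M) (S \<union> N) = emeasure (completion M) S"
    using assms(1) by (intro emeasure_Un_null_set) auto
  then show ?thesis
    using assms(1) by simp
qed

context pair_sigma_finite
begin

lemma
  assumes A: "A \<in> sets (completion M1)" and B: "B \<in> sets (completion M2)"
  shows Times_in_sets_completion: "A \<times> B \<in> sets (completion (M1 \<Otimes>\<^sub>M M2))"
    and emeasure_completion_Times:
      "emeasure (completion (M1 \<Otimes>\<^sub>M M2)) (A \<times> B) =
        emeasure (completion M1) A * emeasure (completion M2) B"
proof -
  obtain SA NA NA' where SA: "A = SA \<union> NA" "NA \<subseteq> NA'" "NA' \<in> null_sets M1" "SA \<in> sets M1"
    using A by (rule sets_completionE)
  obtain SB NB NB' where SB: "B = SB \<union> NB" "NB \<subseteq> NB'" "NB' \<in> null_sets M2" "SB \<in> sets M2"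
    using B by (rule sets_completionE)
  have "A \<subseteq> space M1" "B \<subseteq> space M2"
    using A B sets.sets_into_space by fastforce+
  then have AB: "A \<times> B = SA \<times> SB \<union> (A \<times> B - SA \<times> SB)"
    and null: "A \<times> B - SA \<times> SB \<subseteq> NA' \<times> space M2 \<union> space M1 \<times> NB'"
    using SA SB by auto
  have null': "NA' \<times> space M2 \<union> space M1 \<times> NB' \<in> null_sets (M1 \<Otimes>\<^sub>M M2)"
    using SA SB by blast
  have S: "SA \<times> SB \<in> sets (M1 \<Otimes>\<^sub>M M2)"
    using SA SB by blast
  show "A \<times> B \<in> sets (completion (M1 \<Otimes>\<^sub>M M2))"
    using AB null null' S by (blast intro: sets_completionI)
  have "emeasure (completion (M1 \<Otimes>\<^sub>M M2)) (A \<times> B) = emeasure (M1 \<Otimes>\<^sub>M M2) (SA \<times> SB)"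
    by (subst AB) (rule emeasure_completion_Un_null[OF S null null'])
  also have "\<dots> = emeasure M1 SA * emeasure M2 SB"
    using SA SB by (simp add: M2.emeasure_pair_measure_Times)
  also have "\<dots> = emeasure (completion M1) A * emeasure (completion M2) B"
    using SA SB by (simp add: emeasure_completion_Un_null)
  finally show "emeasure (completion (M1 \<Otimes>\<^sub>M M2)) (A \<times> B) =
      emeasure (completion M1) A * emeasure (completion M2) B" .
qed

lemma measurable_ident_completion_pair_measure:
  "(\<lambda>z. z) \<in> completion (M1 \<Otimes>\<^sub>M M2) \<rightarrow>\<^sub>M completion M1 \<Otimes>\<^sub>M completion M2"
proof -
  have fst: "fst \<in> completion (M1 \<Otimes>\<^sub>M M2) \<rightarrow>\<^sub>M completion M1"
  proof (rule measurableI)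
    fix A assume "A \<in> sets (completion M1)"
    then have "A \<times> space M2 \<in> sets (completion (M1 \<Otimes>\<^sub>M M2))"
      by (intro Times_in_sets_completion) auto
    moreover have "fst -` A \<inter> space (completion (M1 \<Otimes>\<^sub>M M2)) = A \<times> space M2"
      using \<open>A \<in> sets (completion M1)\<close> sets.sets_into_space by (fastforce simp: space_pair_measure)
    ultimately show "fst -` A \<inter> space (completion (M1 \<Otimes>\<^sub>M M2)) \<in> sets (completion (M1 \<Otimes>\<^sub>M M2))"
      by simp
  qed (auto simp: space_pair_measure)
  have snd: "snd \<in> completion (M1 \<Otimes>\<^sub>M M2) \<rightarrow>\<^sub>M completion M2"
  proof (rule measurableI)
    fix B assume "B \<in> sets (completion M2)"
    then have "space M1 \<times> B \<in> sets (completion (M1 \<Otimes>\<^sub>M M2))"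
      by (intro Times_in_sets_completion) auto
    moreover have "snd -` B \<inter> space (completion (M1 \<Otimes>\<^sub>M M2)) = space M1 \<times> B"
      using \<open>B \<in> sets (completion M2)\<close> sets.sets_into_space by (fastforce simp: space_pair_measure)
    ultimately show "snd -` B \<inter> space (completion (M1 \<Otimes>\<^sub>M M2)) \<in> sets (completion (M1 \<Otimes>\<^sub>M M2))"
      by simp
  qed (auto simp: space_pair_measure)
  from measurable_Pair[OF fst snd] show ?thesis
    by simp
qed

text \<open>The completion of a product is larger than the product of the completions, so integrals
  over the former can only be computed by Fubini for functions measurable for the latter.\<close>

lemma distr_ident_completion_pair_measure:
  "distr (completion (M1 \<Otimes>\<^sub>M M2)) (completion M1 \<Otimes>\<^sub>M completion M2) (\<lambda>z. z) =
    completion M1 \<Otimes>\<^sub>M completion M2"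
proof (rule pair_measure_eqI[symmetric])
  show "sigma_finite_measure (completion M1)" "sigma_finite_measure (completion M2)"
    by (rule M1.sigma_finite_measure_completion M2.sigma_finite_measure_completion)+
  show "sets (completion M1 \<Otimes>\<^sub>M completion M2) =
      sets (distr (completion (M1 \<Otimes>\<^sub>M M2)) (completion M1 \<Otimes>\<^sub>M completion M2) (\<lambda>z. z))"
    by (rule sets_distr[symmetric])
  fix A B assume A: "A \<in> sets (completion M1)" and B: "B \<in> sets (completion M2)"
  have "A \<subseteq> space M1" "B \<subseteq> space M2"
    using A B sets.sets_into_space by fastforce+
  then have AB: "(\<lambda>z. z) -` (A \<times> B) \<inter> space (completion (M1 \<Otimes>\<^sub>M M2)) = A \<times> B"
    by (auto simp: space_pair_measure)
  have "emeasure (distr (completion (M1 \<Otimes>\<^sub>M M2)) (completion M1 \<Otimes>\<^sub>M completion M2) (\<lambda>z. z)) (A \<times> B)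
      = emeasure (completion (M1 \<Otimes>\<^sub>M M2)) (A \<times> B)"
    using emeasure_distr[OF measurable_ident_completion_pair_measure pair_measureI[OF A B]] by (simp only: AB)
  also have "\<dots> = emeasure (completion M1) A * emeasure (completion M2) B"
    by (rule emeasure_completion_Times[OF A B])
  finally show "emeasure (completion M1) A * emeasure (completion M2) B =
      emeasure (distr (completion (M1 \<Otimes>\<^sub>M M2)) (completion M1 \<Otimes>\<^sub>M completion M2) (\<lambda>z. z)) (A \<times> B)"
    by (rule sym)
qed

lemma integrable_mult_fst_snd:
  fixes u :: "'a \<Rightarrow> 'c::{real_normed_field, banach, second_countable_topology}" and v :: "'b \<Rightarrow> 'c"
  assumes u: "integrable M1 u" and v: "integrable M2 v"
  shows "integrable (M1 \<Otimes>\<^sub>M M2) (\<lambda>z. u (fst z) * v (snd z))"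
  unfolding integrable_iff_bounded
proof
  have [measurable]: "u \<in> borel_measurable M1" "v \<in> borel_measurable M2"
    using u v by auto
  show "(\<lambda>z. u (fst z) * v (snd z)) \<in> borel_measurable (M1 \<Otimes>\<^sub>M M2)"
    by measurable
  have "(\<integral>\<^sup>+ z. ennreal (norm (u (fst z) * v (snd z))) \<partial>(M1 \<Otimes>\<^sub>M M2))
      = (\<integral>\<^sup>+ x. \<integral>\<^sup>+ y. ennreal (norm (u x)) * ennreal (norm (v y)) \<partial>M2 \<partial>M1)"
    by (subst M2.nn_integral_fst[symmetric]) (auto simp: norm_mult ennreal_mult)
  also have "\<dots> = (\<integral>\<^sup>+ x. ennreal (norm (u x)) \<partial>M1) * (\<integral>\<^sup>+ y. ennreal (norm (v y)) \<partial>M2)"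
    by (simp add: nn_integral_cmult nn_integral_multc)
  also have "\<dots> < \<infinity>"
    using u v unfolding integrable_iff_bounded by (simp add: ennreal_mult_less_top)
  finally show "(\<integral>\<^sup>+ z. ennreal (norm (u (fst z) * v (snd z))) \<partial>(M1 \<Otimes>\<^sub>M M2)) < \<infinity>" .
qed

lemma integral_mult_fst_snd:
  fixes u :: "'a \<Rightarrow> 'c::{real_normed_field, banach, second_countable_topology}" and v :: "'b \<Rightarrow> 'c"
  assumes "integrable M1 u" "integrable M2 v"
  shows "integral\<^sup>L (M1 \<Otimes>\<^sub>M M2) (\<lambda>z. u (fst z) * v (snd z)) = integral\<^sup>L M1 u * integral\<^sup>L M2 v"
  using integral_fst'[OF integrable_mult_fst_snd[OF assms]] by simp

end

section \<open>Lebesgue measure on a product of Euclidean spaces\<close>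

interpretation lebesgue_pair: pair_sigma_finite "lebesgue :: 'a::euclidean_space measure" "lebesgue :: 'b::euclidean_space measure"
  by (intro pair_sigma_finite.intro lborel.sigma_finite_measure_completion)

lemma
  fixes A :: "'a::euclidean_space set" and B :: "'b::euclidean_space set"
  assumes "A \<in> sets lebesgue" "B \<in> sets lebesgue"
  shows sets_lebesgue_Times: "A \<times> B \<in> sets lebesgue"
    and emeasure_lebesgue_Times: "emeasure lebesgue (A \<times> B) = emeasure lebesgue A * emeasure lebesgue B"
  using lborel_pair.Times_in_sets_completion[OF assms] lborel_pair.emeasure_completion_Times[OF assms]
  by (simp_all add: lborel_prod)

lemma measurable_lebesgue_from_pair_measure:
  assumes "f \<in> lebesgue \<Otimes>\<^sub>M lebesgue \<rightarrow>\<^sub>M N"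
  shows "f \<in> (lebesgue :: ('a::euclidean_space \<times> 'b::euclidean_space) measure) \<rightarrow>\<^sub>M N"
  using measurable_compose[OF lborel_pair.measurable_ident_completion_pair_measure assms]
  by (simp add: lborel_prod)

lemma integrable_lebesgue_pair_measure_iff:
  fixes f :: "'a::euclidean_space \<times> 'b::euclidean_space \<Rightarrow> 'c::{banach, second_countable_topology}"
  assumes "f \<in> borel_measurable (lebesgue \<Otimes>\<^sub>M lebesgue)"
  shows "integrable lebesgue f \<longleftrightarrow> integrable (lebesgue \<Otimes>\<^sub>M lebesgue) f"
proof -
  have "integrable (completion (lborel \<Otimes>\<^sub>M lborel)) f \<longleftrightarrow> integrable (lebesgue \<Otimes>\<^sub>M lebesgue) f"
    using integrable_distr_eq[OF lborel_pair.measurable_ident_completion_pair_measure assms]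
    by (simp only: lborel_pair.distr_ident_completion_pair_measure)
  then show ?thesis
    by (simp only: lborel_prod)
qed

lemma integral_lebesgue_pair_measure:
  fixes f :: "'a::euclidean_space \<times> 'b::euclidean_space \<Rightarrow> 'c::{banach, second_countable_topology}"
  assumes "f \<in> borel_measurable (lebesgue \<Otimes>\<^sub>M lebesgue)"
  shows "integral\<^sup>L lebesgue f = integral\<^sup>L (lebesgue \<Otimes>\<^sub>M lebesgue) f"
proof -
  have "integral\<^sup>L (completion (lborel \<Otimes>\<^sub>M lborel)) f = integral\<^sup>L (lebesgue \<Otimes>\<^sub>M lebesgue) f"
    using integral_distr[OF lborel_pair.measurable_ident_completion_pair_measure assms]
    by (simp only: lborel_pair.distr_ident_completion_pair_measure)
  then show ?thesis
    by (simp only: lborel_prod)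
qed

lemma
  fixes u :: "'a::euclidean_space \<Rightarrow> 'c::{real_normed_field, banach, second_countable_topology}"
    and v :: "'b::euclidean_space \<Rightarrow> 'c"
  assumes u: "set_integrable lebesgue A u" and v: "set_integrable lebesgue B v"
  shows set_integrable_Times_mult: "set_integrable lebesgue (A \<times> B) (\<lambda>z. u (fst z) * v (snd z))"
    and set_integral_Times_mult:
      "(LINT z:A \<times> B|lebesgue. u (fst z) * v (snd z)) = (LINT x:A|lebesgue. u x) * (LINT y:B|lebesgue. v y)"
proof -
  define u' where "u' x = indicator A x *\<^sub>R u x" for x
  define v' where "v' y = indicator B y *\<^sub>R v y" for y
  have u': "integrable lebesgue u'" and v': "integrable lebesgue v'"
    using u v unfolding set_integrable_def u'_def v'_def .
  then have [measurable]: "u' \<in> borel_measurable lebesgue" "v' \<in> borel_measurable lebesgue"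
    by auto
  have eq: "(\<lambda>z. indicator (A \<times> B) z *\<^sub>R (u (fst z) * v (snd z))) = (\<lambda>z. u' (fst z) * v' (snd z))"
    by (auto simp: u'_def v'_def indicator_times)
  have m: "(\<lambda>z. u' (fst z) * v' (snd z)) \<in> borel_measurable (lebesgue \<Otimes>\<^sub>M lebesgue)"
    by measurable
  show "set_integrable lebesgue (A \<times> B) (\<lambda>z. u (fst z) * v (snd z))"
    unfolding set_integrable_def eq integrable_lebesgue_pair_measure_iff[OF m]
    by (rule lebesgue_pair.integrable_mult_fst_snd[OF u' v'])
  show "(LINT z:A \<times> B|lebesgue. u (fst z) * v (snd z)) = (LINT x:A|lebesgue. u x) * (LINT y:B|lebesgue. v y)"
    unfolding set_lebesgue_integral_def eq integral_lebesgue_pair_measure[OF m]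
      u'_def[symmetric] v'_def[symmetric]
    by (rule lebesgue_pair.integral_mult_fst_snd[OF u' v'])
qed

lemma
  fixes h :: "'a::euclidean_space \<times> 'b::euclidean_space \<Rightarrow> 'c::{banach, second_countable_topology}"
  assumes [measurable]: "A \<in> sets lebesgue" "B \<in> sets lebesgue" "h \<in> borel_measurable (lebesgue \<Otimes>\<^sub>M lebesgue)"
    and h: "set_integrable lebesgue (A \<times> B) h"
  shows set_integrable_Times_fiber_integral: "set_integrable lebesgue B (\<lambda>y. LINT x:A|lebesgue. h (x, y))"
    and set_integral_Times_iterated:
      "(LINT z:A \<times> B|lebesgue. h z) = (LINT y:B|lebesgue. LINT x:A|lebesgue. h (x, y))"
proof -
  define h' where "h' z = indicator (A \<times> B) z *\<^sub>R h z" for z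
  have [measurable]: "h' \<in> borel_measurable (lebesgue \<Otimes>\<^sub>M lebesgue)"
    unfolding h'_def by measurable
  have int: "integrable (lebesgue \<Otimes>\<^sub>M lebesgue) h'"
    using h unfolding set_integrable_def h'_def[symmetric] by (simp add: integrable_lebesgue_pair_measure_iff)
  have fiber: "(\<integral>x. h' (x, y) \<partial>lebesgue) = indicator B y *\<^sub>R (LINT x:A|lebesgue. h (x, y))" for y
    by (simp add: h'_def set_lebesgue_integral_def indicator_times split: split_indicator)
  show "set_integrable lebesgue B (\<lambda>y. LINT x:A|lebesgue. h (x, y))"
    using lebesgue_pair.integrable_snd[of "\<lambda>x y. h' (x, y)"] int
    unfolding set_integrable_def fiber by simp
  have "(LINT z:A \<times> B|lebesgue. h z) = integral\<^sup>L (lebesgue \<Otimes>\<^sub>M lebesgue) h'"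
    unfolding set_lebesgue_integral_def h'_def[symmetric] by (simp add: integral_lebesgue_pair_measure)
  also have "\<dots> = (\<integral>y. (\<integral>x. h' (x, y) \<partial>lebesgue) \<partial>lebesgue)"
    using lebesgue_pair.integral_snd[of "\<lambda>x y. h' (x, y)"] int by simp
  finally show "(LINT z:A \<times> B|lebesgue. h z) = (LINT y:B|lebesgue. LINT x:A|lebesgue. h (x, y))"
    unfolding fiber set_lebesgue_integral_def .
qed

lemma set_integral_Times_ge:
  fixes \<Phi> :: "'a::euclidean_space \<times> 'b::euclidean_space \<Rightarrow> real"
  assumes "A \<in> sets lebesgue" "B \<in> sets lebesgue" "\<Phi> \<in> borel_measurable (lebesgue \<Otimes>\<^sub>M lebesgue)"
    and "set_integrable lebesgue (A \<times> B) \<Phi>" "set_integrable lebesgue B \<phi>"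
    and "\<And>y. y \<in> B \<Longrightarrow> \<phi> y \<le> (LINT x:A|lebesgue. \<Phi> (x, y))"
  shows "(LINT y:B|lebesgue. \<phi> y) \<le> (LINT z:A \<times> B|lebesgue. \<Phi> z)"
  unfolding set_integral_Times_iterated[OF assms(1-4)]
  using assms(5) set_integrable_Times_fiber_integral[OF assms(1-4)] assms(6) by (rule set_integral_mono)

lemma norm_diff_power2_le: "(norm (u - v))\<^sup>2 \<le> 2 * (norm u)\<^sup>2 + 2 * (norm (v :: 'a::real_normed_vector))\<^sup>2"
proof -
  have "(norm (u - v))\<^sup>2 \<le> (norm u + norm v)\<^sup>2"
    by (simp add: power_mono norm_triangle_ineq4)
  also have "\<dots> \<le> 2 * (norm u)\<^sup>2 + 2 * (norm v)\<^sup>2"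
    using sum_squares_ge_zero[of "norm u - norm v" 0] by (simp add: power2_eq_square algebra_simps)
  finally show ?thesis .
qed

lemma square_integrable_bounded:
  assumes "\<Omega> \<in> sets lebesgue" "emeasure lebesgue \<Omega> < \<infinity>" "f \<in> borel_measurable lebesgue"
    and "\<And>x. x \<in> \<Omega> \<Longrightarrow> norm (f x) \<le> B"
  shows "square_integrable \<Omega> f"
  unfolding square_integrable_def
  using assms by (auto intro!: set_integrable_bounded[where B="B\<^sup>2"] power_mono)

lemma square_integrable_diff:
  assumes \<Omega>: "\<Omega> \<in> sets lebesgue" and f: "square_integrable \<Omega> f" and g: "square_integrable \<Omega> g"
  shows "square_integrable \<Omega> (\<lambda>x. f x - g x)"
proof -
  have [measurable]: "f \<in> borel_measurable lebesgue" "g \<in> borel_measurable lebesgue"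
    using f g unfolding square_integrable_def by auto
  have "set_integrable lebesgue \<Omega> (\<lambda>x. 2 * (norm (f x))\<^sup>2 + 2 * (norm (g x))\<^sup>2)"
    using f g unfolding square_integrable_def by (auto intro: set_integral_add)
  then have "set_integrable lebesgue \<Omega> (\<lambda>x. (norm (f x - g x))\<^sup>2)"
    by (rule set_integrable_bound) (use \<Omega> in \<open>auto simp: set_borel_measurable_def norm_diff_power2_le\<close>)
  then show ?thesis
    unfolding square_integrable_def by simp
qed

lemma square_integrable_Times_mult:
  assumes "A \<in> sets lebesgue" "B \<in> sets lebesgue"
    and u: "square_integrable A u" and v: "square_integrable B v"
  shows "square_integrable (A \<times> B) (\<lambda>z. u (fst z) * v (snd z))"
proof -
  have [measurable]: "u \<in> borel_measurable lebesgue" "v \<in> borel_measurable lebesgue"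
    using u v unfolding square_integrable_def by auto
  have "(\<lambda>z. u (fst z) * v (snd z)) \<in> borel_measurable (lebesgue \<Otimes>\<^sub>M lebesgue)"
    by measurable
  moreover have "set_integrable lebesgue (A \<times> B) (\<lambda>z. (norm (u (fst z)))\<^sup>2 * (norm (v (snd z)))\<^sup>2)"
    using u v unfolding square_integrable_def
    by (intro set_integrable_Times_mult[where u="\<lambda>x. (norm (u x))\<^sup>2" and v="\<lambda>y. (norm (v y))\<^sup>2"]) auto
  ultimately show ?thesis
    unfolding square_integrable_def by (simp add: measurable_lebesgue_from_pair_measure norm_mult power_mult_distrib)
qed

section \<open>Exponentials\<close>

lemma expo_pair: "expo l z = expo (fst l) (fst z) * expo (snd l) (snd z)"
  by (cases l, cases z) (simp add: expo_def algebra_simps flip: exp_add)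

lemma norm_expo [simp]: "norm (expo \<xi> x) = 1"
  unfolding expo_def by (rule norm_exp_i_times)

lemma expo_mult_cnj [simp]: "expo \<xi> x * cnj (expo \<xi> x) = 1"
  by (metis complex_norm_square norm_expo of_real_1 power_one)

lemma borel_measurable_expo [measurable]: "expo \<xi> \<in> borel_measurable borel"
  unfolding expo_def by measurable

lemma lebesgue_measurable_expo [measurable]: "expo \<xi> \<in> borel_measurable lebesgue"
  using measurable_completion[of "expo \<xi>" lborel borel] by simp

lemma pair_measurable_expo [measurable]: "expo l \<in> borel_measurable (lebesgue \<Otimes>\<^sub>M lebesgue)"
proof -
  have "(\<lambda>z. expo (fst l) (fst z) * expo (snd l) (snd z)) \<in> borel_measurable (lebesgue \<Otimes>\<^sub>M lebesgue)"
    by measurable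
  then show ?thesis
    by (simp flip: expo_pair)
qed

lemma norm_sum_expo_le: "norm (\<Sum>t\<in>T. d t * expo (k t) x) \<le> (\<Sum>t\<in>T. norm (d t))"
  by (rule order_trans[OF norm_sum]) (simp add: norm_mult)

lemma set_integrable_expo_mult_cnj:
  assumes "A \<in> sets lebesgue" "emeasure lebesgue A < \<infinity>"
  shows "set_integrable lebesgue A (\<lambda>x. expo \<xi> x * cnj (expo \<eta> x))"
  using assms by (rule set_integrable_bounded[where B=1]) (auto simp: norm_mult)

lemma square_integrable_expo:
  assumes "\<Omega> \<in> sets lebesgue" "emeasure lebesgue \<Omega> < \<infinity>"
  shows "square_integrable \<Omega> (expo \<xi>)"
  using assms by (rule square_integrable_bounded[where B=1]) simp_all

lemma square_integrable_expo_sum: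
  assumes "\<Omega> \<in> sets lebesgue" "emeasure lebesgue \<Omega> < \<infinity>"
  shows "square_integrable \<Omega> (\<lambda>x. \<Sum>t\<in>T. d t * expo (k t) x)"
  using assms by (rule square_integrable_bounded[where B="\<Sum>t\<in>T. norm (d t)"]) (measurable, rule norm_sum_expo_le)

lemma L2_inner_expo_sum:
  assumes "A \<in> sets lebesgue" "emeasure lebesgue A < \<infinity>" "finite T"
  shows "L2_inner A (expo e) (\<lambda>x. \<Sum>t\<in>T. d t * expo (k t) x) =
    (\<Sum>t\<in>T. cnj (d t) * L2_inner A (expo e) (expo (k t)))"
proof -
  have "L2_inner A (expo e) (\<lambda>x. \<Sum>t\<in>T. d t * expo (k t) x) =
      (LINT x:A|lebesgue. (\<Sum>t\<in>T. cnj (d t) * (expo e x * cnj (expo (k t) x))))"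
    unfolding L2_inner_def by (simp add: sum_distrib_left algebra_simps)
  also have "\<dots> = (\<Sum>t\<in>T. cnj (d t) * L2_inner A (expo e) (expo (k t)))"
    using assms set_integrable_expo_mult_cnj[OF assms(1,2)] by (simp add: set_integral_sum L2_inner_def)
  finally show ?thesis .
qed

lemma L2_inner_expo_self:
  assumes "A \<in> sets lebesgue" "emeasure lebesgue A < \<infinity>"
  shows "L2_inner A (expo \<xi>) (expo \<xi>) = measure lebesgue A"
  unfolding L2_inner_def using assms by (simp add: set_integral_const scaleR_conv_of_real)

lemma L2_inner_expo_commute: "L2_inner A (expo \<eta>) (expo \<xi>) = cnj (L2_inner A (expo \<xi>) (expo \<eta>))"
proof -
  have "cnj (L2_inner A (expo \<xi>) (expo \<eta>)) =
      (\<integral>x. cnj (indicator A x *\<^sub>R (expo \<xi> x * cnj (expo \<eta> x))) \<partial>lebesgue)"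
    unfolding L2_inner_def set_lebesgue_integral_def by (rule Bochner_Integration.integral_cnj[symmetric])
  then show ?thesis
    unfolding L2_inner_def set_lebesgue_integral_def by (simp add: mult.commute)
qed

lemma L2_inner_expo_Times:
  fixes A :: "'a::euclidean_space set" and B :: "'b::euclidean_space set"
  assumes "A \<in> sets lebesgue" "emeasure lebesgue A < \<infinity>" "B \<in> sets lebesgue" "emeasure lebesgue B < \<infinity>"
  shows "L2_inner (A \<times> B) (expo (\<xi>, \<xi>')) (expo (\<eta>, \<eta>')) =
    L2_inner A (expo \<xi>) (expo \<eta>) * L2_inner B (expo \<xi>') (expo \<eta>')"
proof -
  have "expo (\<xi>, \<xi>') z * cnj (expo (\<eta>, \<eta>') z) =
      (expo \<xi> (fst z) * cnj (expo \<eta> (fst z))) * (expo \<xi>' (snd z) * cnj (expo \<eta>' (snd z)))" for z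
    by (simp add: expo_pair[of "(_, _)"])
  then show ?thesis
    unfolding L2_inner_def
    by (simp only: set_integral_Times_mult[OF set_integrable_expo_mult_cnj[OF assms(1,2)]
          set_integrable_expo_mult_cnj[OF assms(3,4)]])
qed

lemma cmod_diff_power2: "(cmod (u - v))\<^sup>2 = (cmod u)\<^sup>2 - 2 * Re (u * cnj v) + (cmod v)\<^sup>2"
  unfolding cmod_power2 by (simp add: power2_eq_square algebra_simps)

lemma measure_mult_norm_le_L2_dist_orthogonal:
  fixes A :: "'a::euclidean_space set" and k :: "'t \<Rightarrow> 'a"
  assumes A: "A \<in> sets lebesgue" "emeasure lebesgue A < \<infinity>"
    and T: "finite T" "\<And>t. t \<in> T \<Longrightarrow> L2_inner A (expo e) (expo (k t)) = 0"
  shows "measure lebesgue A * (norm a)\<^sup>2 \<le>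
    (LINT x:A|lebesgue. (norm (a * expo e x - (\<Sum>t\<in>T. d t * expo (k t) x)))\<^sup>2)"
proof -
  define K where "K x = (\<Sum>t\<in>T. d t * expo (k t) x)" for x
  define D where "D = (\<Sum>t\<in>T. norm (d t))"
  have K_le: "norm (K x) \<le> D" for x
    unfolding K_def D_def by (rule norm_sum_expo_le)
  have [measurable]: "K \<in> borel_measurable lebesgue"
    unfolding K_def by measurable
  have cross_int: "set_integrable lebesgue A (\<lambda>x. a * (expo e x * cnj (K x)))"
    by (rule set_integrable_bounded[OF A, where B="norm a * D"])
      (auto simp: norm_mult intro!: mult_left_mono K_le)
  txt \<open>Pointwise, |a e - K|^2 = |a|^2 - 2 R + |K|^2, and R integrates to 0 by orthogonality.\<close>
  define R where "R x = Re (a * (expo e x * cnj (K x)))" for x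
  have R_int: "set_integrable lebesgue A R"
    unfolding R_def by (rule set_integrable_Re[OF cross_int])
  have "(LINT x:A|lebesgue. expo e x * cnj (K x)) = 0"
    using L2_inner_expo_sum[OF A T(1), of e d k] T(2) unfolding L2_inner_def K_def by simp
  then have R_integral: "(LINT x:A|lebesgue. R x) = 0"
    unfolding R_def set_integral_Re[OF cross_int] by simp
  have dist_int: "set_integrable lebesgue A (\<lambda>x. (norm (a * expo e x - K x))\<^sup>2)"
    using square_integrable_diff[OF A(1) square_integrable_bounded[OF A, of "\<lambda>x. a * expo e x" "norm a"]
        square_integrable_expo_sum[OF A, of d k T, folded K_def]]
    by (simp add: square_integrable_def norm_mult)
  have const_int: "set_integrable lebesgue A (\<lambda>_. (norm a)\<^sup>2)"
    using A by (intro set_integrable_bounded[where B="(norm a)\<^sup>2"]) auto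
  have "measure lebesgue A * (norm a)\<^sup>2 = (LINT x:A|lebesgue. (norm a)\<^sup>2) - (LINT x:A|lebesgue. 2 * R x)"
    using A R_integral by (simp add: set_integral_const)
  also have "\<dots> = (LINT x:A|lebesgue. (norm a)\<^sup>2 - 2 * R x)"
    using const_int R_int by (simp add: set_integral_diff)
  also have "\<dots> \<le> (LINT x:A|lebesgue. (norm (a * expo e x - K x))\<^sup>2)"
  proof (rule set_integral_mono[OF set_integral_diff(1)[OF const_int set_integrable_mult_right[OF R_int]] dist_int])
    fix x
    have "(norm (a * expo e x - K x))\<^sup>2 = (norm a)\<^sup>2 - 2 * R x + (norm (K x))\<^sup>2"
      unfolding R_def cmod_diff_power2 by (simp only: norm_mult norm_expo mult_1_right mult.assoc)
    then show "(norm a)\<^sup>2 - 2 * R x \<le> (norm (a * expo e x - K x))\<^sup>2"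
      by simp
  qed
  finally show ?thesis
    unfolding K_def .
qed

lemma measure_mult_norm_le_L2_dist_fiber:
  fixes \<Omega>1 :: "'a::euclidean_space set" and S :: "('a \<times> 'b::euclidean_space) set"
  assumes \<Omega>1: "\<Omega>1 \<in> sets lebesgue" "emeasure lebesgue \<Omega>1 < \<infinity>"
    and S: "finite S"
    and orth: "\<And>p. p \<in> S \<Longrightarrow> fst p \<noteq> l1 \<Longrightarrow> L2_inner \<Omega>1 (expo l1) (expo (fst p)) = 0"
  shows "measure lebesgue \<Omega>1 * (norm (a - (\<Sum>\<xi>\<in>Pair l1 -` S. c (l1, \<xi>) * expo \<xi> y)))\<^sup>2 \<le>
    (LINT x:\<Omega>1|lebesgue. (norm (expo l1 x * a - (\<Sum>p\<in>S. c p * expo p (x, y))))\<^sup>2)"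
proof -
  define g where "g = (\<Sum>\<xi>\<in>Pair l1 -` S. c (l1, \<xi>) * expo \<xi> y)"
  define S0 where "S0 = {p \<in> S. fst p \<noteq> l1}"
  have split: "(\<Sum>p\<in>S. c p * expo p (x, y)) =
      expo l1 x * g + (\<Sum>p\<in>S0. (c p * expo (snd p) y) * expo (fst p) x)" for x
  proof -
    have "(\<Sum>p\<in>S. c p * expo p (x, y)) =
        (\<Sum>p\<in>{p \<in> S. fst p = l1}. c p * expo p (x, y)) + (\<Sum>p\<in>S0. c p * expo p (x, y))"
      unfolding S0_def using S by (subst sum.union_disjoint[symmetric]) (auto intro: sum.cong)
    also have "(\<Sum>p\<in>{p \<in> S. fst p = l1}. c p * expo p (x, y)) = expo l1 x * g"
      unfolding g_def sum_distrib_left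
      by (rule sum.reindex_cong[where l="Pair l1"]) (auto simp: inj_on_def expo_pair[of "(_, _)"] algebra_simps)
    finally show ?thesis
      by (simp add: expo_pair[of _ "(_, _)"] algebra_simps)
  qed
  have "measure lebesgue \<Omega>1 * (norm (a - g))\<^sup>2 \<le>
      (LINT x:\<Omega>1|lebesgue. (norm ((a - g) * expo l1 x - (\<Sum>p\<in>S0. (c p * expo (snd p) y) * expo (fst p) x)))\<^sup>2)"
    using S orth by (intro measure_mult_norm_le_L2_dist_orthogonal[OF \<Omega>1]) (auto simp: S0_def)
  also have "\<dots> = (LINT x:\<Omega>1|lebesgue. (norm (expo l1 x * a - (\<Sum>p\<in>S. c p * expo p (x, y))))\<^sup>2)"
    by (simp add: split algebra_simps)
  finally show ?thesis
    unfolding g_def .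
qed

lemma measure_mult_L2_dist_le_L2_dist_Times:
  fixes \<Omega>1 :: "'a::euclidean_space set" and \<Omega>2 :: "'b::euclidean_space set"
  assumes \<Omega>1: "\<Omega>1 \<in> sets lebesgue" "emeasure lebesgue \<Omega>1 < \<infinity>"
    and \<Omega>2: "\<Omega>2 \<in> sets lebesgue" "emeasure lebesgue \<Omega>2 < \<infinity>"
    and f: "square_integrable \<Omega>2 f" and S: "finite S"
    and orth: "\<And>p. p \<in> S \<Longrightarrow> fst p \<noteq> l1 \<Longrightarrow> L2_inner \<Omega>1 (expo l1) (expo (fst p)) = 0"
  shows "measure lebesgue \<Omega>1 *
      (LINT y:\<Omega>2|lebesgue. (norm (f y - (\<Sum>\<xi>\<in>Pair l1 -` S. c (l1, \<xi>) * expo \<xi> y)))\<^sup>2) \<le>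
    (LINT z:\<Omega>1 \<times> \<Omega>2|lebesgue. (norm (expo l1 (fst z) * f (snd z) - (\<Sum>p\<in>S. c p * expo p z)))\<^sup>2)"
proof -
  have [measurable]: "f \<in> borel_measurable lebesgue"
    using f unfolding square_integrable_def by simp
  define F where "F z = expo l1 (fst z) * f (snd z)" for z
  define g where "g y = (\<Sum>\<xi>\<in>Pair l1 -` S. c (l1, \<xi>) * expo \<xi> y)" for y
  have \<Omega>12: "\<Omega>1 \<times> \<Omega>2 \<in> sets lebesgue" "emeasure lebesgue (\<Omega>1 \<times> \<Omega>2) < \<infinity>"
    using \<Omega>1 \<Omega>2
    by (simp_all add: sets_lebesgue_Times emeasure_lebesgue_Times ennreal_mult_less_top del: emeasure_completion)
  have "square_integrable (\<Omega>1 \<times> \<Omega>2) F"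
    unfolding F_def using \<Omega>1(1) \<Omega>2(1) square_integrable_expo[OF \<Omega>1] f
    by (rule square_integrable_Times_mult)
  then have "square_integrable (\<Omega>1 \<times> \<Omega>2) (\<lambda>z. F z - (\<Sum>p\<in>S. c p * expo p z))"
    using \<Omega>12(1) square_integrable_expo_sum[OF \<Omega>12] by (intro square_integrable_diff)
  then have dist_int: "set_integrable lebesgue (\<Omega>1 \<times> \<Omega>2) (\<lambda>z. (norm (F z - (\<Sum>p\<in>S. c p * expo p z)))\<^sup>2)"
    unfolding square_integrable_def by simp
  have "square_integrable \<Omega>2 (\<lambda>y. f y - g y)"
    unfolding g_def using \<Omega>2(1) f square_integrable_expo_sum[OF \<Omega>2] by (rule square_integrable_diff)
  then have fiber_dist_int:
      "set_integrable lebesgue \<Omega>2 (\<lambda>y. measure lebesgue \<Omega>1 * (norm (f y - g y))\<^sup>2)"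
    unfolding square_integrable_def by simp
  have "(LINT y:\<Omega>2|lebesgue. measure lebesgue \<Omega>1 * (norm (f y - g y))\<^sup>2) \<le>
      (LINT z:\<Omega>1 \<times> \<Omega>2|lebesgue. (norm (F z - (\<Sum>p\<in>S. c p * expo p z)))\<^sup>2)"
  proof (rule set_integral_Times_ge[OF \<Omega>1(1) \<Omega>2(1) _ dist_int fiber_dist_int])
    show "(\<lambda>z. (norm (F z - (\<Sum>p\<in>S. c p * expo p z)))\<^sup>2) \<in> borel_measurable (lebesgue \<Otimes>\<^sub>M lebesgue)"
      unfolding F_def by measurable
    show "measure lebesgue \<Omega>1 * (norm (f y - g y))\<^sup>2 \<le>
        (LINT x:\<Omega>1|lebesgue. (norm (F (x, y) - (\<Sum>p\<in>S. c p * expo p (x, y))))\<^sup>2)" for y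
      unfolding g_def F_def fst_conv snd_conv
      by (rule measure_mult_norm_le_L2_dist_fiber[OF \<Omega>1 S orth])
  qed
  then show ?thesis
    unfolding F_def g_def by simp
qed

section \<open>Fibres of a spectral set\<close>

lemma exps_orthogonal_fiber:
  fixes \<Omega>1 :: "'a::euclidean_space set" and \<Omega>2 :: "'b::euclidean_space set"
  assumes \<Omega>1: "\<Omega>1 \<in> sets lebesgue" "0 < emeasure lebesgue \<Omega>1" "emeasure lebesgue \<Omega>1 < \<infinity>"
    and \<Omega>2: "\<Omega>2 \<in> sets lebesgue" "emeasure lebesgue \<Omega>2 < \<infinity>"
    and orth: "exps_orthogonal (\<Omega>1 \<times> \<Omega>2) \<Lambda>"
  shows "exps_orthogonal \<Omega>2 {l2. (l1, l2) \<in> \<Lambda>}"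
  unfolding exps_orthogonal_def
proof (intro ballI impI)
  fix \<xi> \<eta> assume "\<xi> \<in> {l2. (l1, l2) \<in> \<Lambda>}" "\<eta> \<in> {l2. (l1, l2) \<in> \<Lambda>}" "\<xi> \<noteq> \<eta>"
  then have "L2_inner (\<Omega>1 \<times> \<Omega>2) (expo (l1, \<xi>)) (expo (l1, \<eta>)) = 0"
    using orth unfolding exps_orthogonal_def by simp
  then have "measure lebesgue \<Omega>1 * L2_inner \<Omega>2 (expo \<xi>) (expo \<eta>) = 0"
    by (simp only: L2_inner_expo_Times[OF \<Omega>1(1,3) \<Omega>2] L2_inner_expo_self[OF \<Omega>1(1,3)])
  moreover have "0 < measure lebesgue \<Omega>1"
    using \<Omega>1(2,3) by (rule measure_pos_if_emeasure_pos)
  ultimately show "L2_inner \<Omega>2 (expo \<xi>) (expo \<eta>) = 0"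
    by simp
qed

lemma orthogonal_if_exps_total_fiber:
  fixes \<Omega>1 :: "'a::euclidean_space set" and \<Omega>2 :: "'b::euclidean_space set"
  assumes \<Omega>1: "\<Omega>1 \<in> sets lebesgue" "emeasure lebesgue \<Omega>1 < \<infinity>"
    and \<Omega>2: "\<Omega>2 \<in> sets lebesgue" "0 < emeasure lebesgue \<Omega>2" "emeasure lebesgue \<Omega>2 < \<infinity>"
    and orth: "exps_orthogonal (\<Omega>1 \<times> \<Omega>2) \<Lambda>"
    and total: "exps_total \<Omega>2 {l2. (l1, l2) \<in> \<Lambda>}"
    and l1': "(l1', \<xi>') \<in> \<Lambda>" "l1' \<noteq> l1"
  shows "L2_inner \<Omega>1 (expo l1) (expo l1') = 0"
proof (rule ccontr)
  assume nonzero: "L2_inner \<Omega>1 (expo l1) (expo l1') \<noteq> 0"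
  have fiber_orth: "L2_inner \<Omega>2 (expo \<xi>') (expo \<xi>) = 0" if "(l1, \<xi>) \<in> \<Lambda>" for \<xi>
  proof -
    have "L2_inner (\<Omega>1 \<times> \<Omega>2) (expo (l1', \<xi>')) (expo (l1, \<xi>)) = 0"
      using orth that l1' unfolding exps_orthogonal_def by simp
    then have "L2_inner \<Omega>1 (expo l1') (expo l1) * L2_inner \<Omega>2 (expo \<xi>') (expo \<xi>) = 0"
      by (simp only: L2_inner_expo_Times[OF \<Omega>1 \<Omega>2(1,3)])
    moreover have "L2_inner \<Omega>1 (expo l1') (expo l1) \<noteq> 0"
      using nonzero by (subst L2_inner_expo_commute) simp
    ultimately show ?thesis
      by simp
  qed
  define m2 where "m2 = measure lebesgue \<Omega>2"
  have "0 < m2"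
    unfolding m2_def using \<Omega>2(2,3) by (rule measure_pos_if_emeasure_pos)
  moreover have "square_integrable \<Omega>2 (expo \<xi>')"
    using \<Omega>2(1,3) by (rule square_integrable_expo)
  ultimately obtain S c where S: "finite S" "S \<subseteq> {l2. (l1, l2) \<in> \<Lambda>}"
    and approx: "(LINT x:\<Omega>2|lebesgue. (norm (expo \<xi>' x - (\<Sum>\<xi>\<in>S. c \<xi> * expo \<xi> x)))\<^sup>2) < m2"
    using total[unfolded exps_total_def, rule_format] by meson
  have "m2 * (norm (1::complex))\<^sup>2 \<le>
      (LINT x:\<Omega>2|lebesgue. (norm (1 * expo \<xi>' x - (\<Sum>\<xi>\<in>S. c \<xi> * expo \<xi> x)))\<^sup>2)"
    unfolding m2_def
    by (rule measure_mult_norm_le_L2_dist_orthogonal[OF \<Omega>2(1,3) S(1), where k="\<lambda>\<xi>. \<xi>"])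
      (use S(2) fiber_orth in blast)
  then have "m2 \<le> (LINT x:\<Omega>2|lebesgue. (norm (expo \<xi>' x - (\<Sum>\<xi>\<in>S. c \<xi> * expo \<xi> x)))\<^sup>2)"
    by (simp only: norm_one power_one mult_1_left mult_1_right)
  with approx show False
    by linarith
qed

lemma exps_total_fiber_if_orthogonal:
  fixes \<Omega>1 :: "'a::euclidean_space set" and \<Omega>2 :: "'b::euclidean_space set"
  assumes \<Omega>1: "\<Omega>1 \<in> sets lebesgue" "0 < emeasure lebesgue \<Omega>1" "emeasure lebesgue \<Omega>1 < \<infinity>"
    and \<Omega>2: "\<Omega>2 \<in> sets lebesgue" "emeasure lebesgue \<Omega>2 < \<infinity>"
    and total: "exps_total (\<Omega>1 \<times> \<Omega>2) \<Lambda>"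
    and orth: "\<forall>l1' \<in> fst ` \<Lambda> - {l1}. L2_inner \<Omega>1 (expo l1) (expo l1') = 0"
  shows "exps_total \<Omega>2 {l2. (l1, l2) \<in> \<Lambda>}"
  unfolding exps_total_def
proof (intro allI impI)
  fix f :: "'b \<Rightarrow> complex" and \<epsilon> :: real
  assume f: "square_integrable \<Omega>2 f" and "0 < \<epsilon>"
  define m1 where "m1 = measure lebesgue \<Omega>1"
  have "0 < m1"
    unfolding m1_def using \<Omega>1(2,3) by (rule measure_pos_if_emeasure_pos)
  have "square_integrable (\<Omega>1 \<times> \<Omega>2) (\<lambda>z. expo l1 (fst z) * f (snd z))"
    using \<Omega>1(1) \<Omega>2(1) square_integrable_expo[OF \<Omega>1(1,3)] f by (rule square_integrable_Times_mult)
  then obtain S c where S: "finite S" "S \<subseteq> \<Lambda>" and approx: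
      "(LINT z:\<Omega>1 \<times> \<Omega>2|lebesgue. (norm (expo l1 (fst z) * f (snd z) - (\<Sum>p\<in>S. c p * expo p z)))\<^sup>2)
        < m1 * \<epsilon>"
    using total[unfolded exps_total_def, rule_format] \<open>0 < \<epsilon>\<close> \<open>0 < m1\<close> by (meson mult_pos_pos)
  have "L2_inner \<Omega>1 (expo l1) (expo (fst p)) = 0" if "p \<in> S" "fst p \<noteq> l1" for p
    using that S(2) orth by force
  then have "m1 * (LINT y:\<Omega>2|lebesgue. (norm (f y - (\<Sum>\<xi>\<in>Pair l1 -` S. c (l1, \<xi>) * expo \<xi> y)))\<^sup>2)
      \<le> (LINT z:\<Omega>1 \<times> \<Omega>2|lebesgue. (norm (expo l1 (fst z) * f (snd z) - (\<Sum>p\<in>S. c p * expo p z)))\<^sup>2)"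
    unfolding m1_def by (rule measure_mult_L2_dist_le_L2_dist_Times[OF \<Omega>1(1,3) \<Omega>2 f S(1)])
  with approx have "m1 * (LINT y:\<Omega>2|lebesgue. (norm (f y - (\<Sum>\<xi>\<in>Pair l1 -` S. c (l1, \<xi>) * expo \<xi> y)))\<^sup>2)
      < m1 * \<epsilon>"
    by linarith
  then have "(LINT y:\<Omega>2|lebesgue. (norm (f y - (\<Sum>\<xi>\<in>Pair l1 -` S. c (l1, \<xi>) * expo \<xi> y)))\<^sup>2) < \<epsilon>"
    using \<open>0 < m1\<close> by simp
  moreover have "finite (Pair l1 -` S)"
    using S(1) by (rule finite_vimageI) (simp add: inj_on_def)
  moreover have "Pair l1 -` S \<subseteq> {l2. (l1, l2) \<in> \<Lambda>}"
    using S(2) by blast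
  ultimately show "\<exists>S c. finite S \<and> S \<subseteq> {l2. (l1, l2) \<in> \<Lambda>} \<and>
      (LINT y:\<Omega>2|lebesgue. (norm (f y - (\<Sum>\<xi>\<in>S. c \<xi> * expo \<xi> y)))\<^sup>2) < \<epsilon>"
    by (intro exI[of _ "Pair l1 -` S"] exI[of _ "\<lambda>\<xi>. c (l1, \<xi>)"] conjI)
qed

theorem lemma2p3:
  fixes \<Omega>1 :: "'a::euclidean_space set" and \<Omega>2 :: "'b::euclidean_space set"
    and \<Lambda> :: "('a \<times> 'b) set"
  assumes "\<Omega>1 \<in> sets lebesgue" "0 < emeasure lebesgue \<Omega>1" "emeasure lebesgue \<Omega>1 < \<infinity>"
    and "\<Omega>2 \<in> sets lebesgue" "0 < emeasure lebesgue \<Omega>2" "emeasure lebesgue \<Omega>2 < \<infinity>"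
    and "spectral_pair (\<Omega>1 \<times> \<Omega>2) \<Lambda>"
  shows "\<forall>l1 \<in> fst ` \<Lambda>.
           exps_orthogonal \<Omega>2 {l2. (l1, l2) \<in> \<Lambda>} \<and>
           (exps_total \<Omega>2 {l2. (l1, l2) \<in> \<Lambda>} \<longleftrightarrow>
              (\<forall>l1' \<in> fst ` \<Lambda> - {l1}. L2_inner \<Omega>1 (expo l1) (expo l1') = 0))"
proof (intro ballI conjI)
  fix l1
  have orth: "exps_orthogonal (\<Omega>1 \<times> \<Omega>2) \<Lambda>" and total: "exps_total (\<Omega>1 \<times> \<Omega>2) \<Lambda>"
    using assms(7) unfolding spectral_pair_def by auto
  show "exps_orthogonal \<Omega>2 {l2. (l1, l2) \<in> \<Lambda>}"
    using assms(1-4,6) orth by (rule exps_orthogonal_fiber)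
  show "exps_total \<Omega>2 {l2. (l1, l2) \<in> \<Lambda>} \<longleftrightarrow>
      (\<forall>l1' \<in> fst ` \<Lambda> - {l1}. L2_inner \<Omega>1 (expo l1) (expo l1') = 0)"
  proof
    assume fiber_total: "exps_total \<Omega>2 {l2. (l1, l2) \<in> \<Lambda>}"
    show "\<forall>l1' \<in> fst ` \<Lambda> - {l1}. L2_inner \<Omega>1 (expo l1) (expo l1') = 0"
    proof
      fix l1' assume "l1' \<in> fst ` \<Lambda> - {l1}"
      then obtain \<xi>' where "(l1', \<xi>') \<in> \<Lambda>" "l1' \<noteq> l1"
        by force
      then show "L2_inner \<Omega>1 (expo l1) (expo l1') = 0"
        by (rule orthogonal_if_exps_total_fiber[OF assms(1,3-6) orth fiber_total])
    qed
  next
    assume "\<forall>l1' \<in> fst ` \<Lambda> - {l1}. L2_inner \<Omega>1 (expo l1) (expo l1') = 0"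
    with assms(1-4,6) total show "exps_total \<Omega>2 {l2. (l1, l2) \<in> \<Lambda>}"
      by (rule exps_total_fiber_if_orthogonal)
  qed
qed

end
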